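(* Let $M$ be a graded $R$-module. The following are equivalent: (1) For all $Q,P\in qp.Spec_g(M)$, if $qp\text{-}V_M^g(Q)=qp\text{-}V_M^g(P)$ then $Q=P$. (2) $|qp.Spec_g^p(M)|\le 1$ for every $p\in Spec_g(R)$. (3) The natural map $\varphi$ is injective.
   Context: $R=\bigoplus_{g\in G}R_g$ is a graded commutative ring with identity graded by a group $G$, $h(R)=\bigcup_g R_g$; $M$ is a graded $R$-module, $h(M)$ its homogeneous elements. $Gr(I)$ is the graded radical of a graded ideal $I$ (elements all of whose homogeneous components have a power in $I$). $Spec_g(R)$: graded prime ideals. $(K:_RM)=\{r: rM\subseteq K\}$. Graded prime submodule: proper graded $P$ with $rm\in P$ ($r\in h(R), m\in h(M)$) implying $m\in P$ or $r\in(P:_RM)$. $Gr_M(K)$: intersection of graded prime submodules containing $K$ ($M$ if none). Graded primeful property of $K$: for each graded prime $p\supseteq(K:_RM)$ there is a graded prime submodule $P\supseteq K$ with $(P:_RM)=p$. Graded quasi-primary submodule: proper graded $Q$ with $rm\in Q$ ($r\in h(R),m\in h(M)$) implying $r\in Gr((Q:_RM))$ or $m\in Gr_M(Q)$. $qp.Spec_g(M)$: graded quasi-primary submodules with the graded primeful property; $qp.Spec_g^p(M)=\{Q\in qp.Spec_g(M): Gr((Q:_RM))=p\}$. $qp\text{-}V_M^g(K)=\{Q\in qp.Spec_g(M): Gr((Q:_RM))\supseteq Gr((K:_RM))\}$. $\overline R=R/\mathrm{Ann}(M)$ and $\overline I=I/\mathrm{Ann}(M)$ for ideals $I\supseteq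 \mathrm{Ann}(M)$. For $Q\in qp.Spec_g(M)$, $(Gr_M(Q):_RM)=Gr((Q:_RM))$ is a graded prime ideal of $R$ containing $\mathrm{Ann}(M)$; the natural map $\varphi:qp.Spec_g(M)\to Spec_g(\overline R)$ is $\varphi(Q)=\overline{(Gr_M(Q):_RM)}$. *)

theory Defs
  imports Complex_Main
begin

definition is_decomp :: "('g \<Rightarrow> 'a::ab_group_add set) \<Rightarrow> 'a \<Rightarrow> ('g \<Rightarrow> 'a) \<Rightarrow> bool" where
  "is_decomp D x c \<longleftrightarrow> finite {g. c g \<noteq> 0} \<and> (\<forall>g. c g \<in> D g) \<and> x = (\<Sum>g\<in>{g. c g \<noteq> 0}. c g)"

definition direct_sum_grading :: "('g \<Rightarrow> 'a::ab_group_add set) \<Rightarrow> bool" where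
  "direct_sum_grading D \<longleftrightarrow>
     (\<forall>g. 0 \<in> D g \<and> (\<forall>x\<in>D g. \<forall>y\<in>D g. x - y \<in> D g)) \<and>
     (\<forall>x. \<exists>!c. is_decomp D x c)"

definition hcomp :: "('g \<Rightarrow> 'a::ab_group_add set) \<Rightarrow> 'a \<Rightarrow> 'g \<Rightarrow> 'a" where
  "hcomp D x = (THE c. is_decomp D x c)"

definition homog :: "('g \<Rightarrow> 'a set) \<Rightarrow> 'a set" where
  "homog D = (\<Union>g. D g)"

definition graded_ring :: "('g::group_add \<Rightarrow> 'r::comm_ring_1 set) \<Rightarrow> bool" where
  "graded_ring RG \<longleftrightarrow> direct_sum_grading RG \<and>
     (\<forall>g h. \<forall>a\<in>RG g. \<forall>b\<in>RG h. a * b \<in> RG (g + h))"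

definition graded_module :: "('g::group_add \<Rightarrow> 'r::comm_ring_1 set) \<Rightarrow> ('r \<Rightarrow> 'm::ab_group_add \<Rightarrow> 'm) \<Rightarrow> ('g \<Rightarrow> 'm set) \<Rightarrow> bool" where
  "graded_module RG scale MG \<longleftrightarrow> graded_ring RG \<and> module scale \<and> direct_sum_grading MG \<and>
     (\<forall>g h. \<forall>a\<in>RG g. \<forall>m\<in>MG h. scale a m \<in> MG (g + h))"

definition is_ideal :: "'r::comm_ring_1 set \<Rightarrow> bool" where
  "is_ideal I \<longleftrightarrow> 0 \<in> I \<and> (\<forall>x\<in>I. \<forall>y\<in>I. x + y \<in> I) \<and> (\<forall>r. \<forall>x\<in>I. r * x \<in> I)"

definition graded_ideal :: "('g \<Rightarrow> 'r::comm_ring_1 set) \<Rightarrow> 'r set \<Rightarrow> bool" where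
  "graded_ideal RG I \<longleftrightarrow> is_ideal I \<and> (\<forall>x\<in>I. \<forall>g. hcomp RG x g \<in> I)"

definition Gr :: "('g \<Rightarrow> 'r::comm_ring_1 set) \<Rightarrow> 'r set \<Rightarrow> 'r set" where
  "Gr RG I = {r. \<forall>g. \<exists>n. (hcomp RG r g) ^ n \<in> I}"

definition Spec_g :: "('g \<Rightarrow> 'r::comm_ring_1 set) \<Rightarrow> 'r set set" where
  "Spec_g RG = {p. graded_ideal RG p \<and> p \<noteq> UNIV \<and>
     (\<forall>a\<in>homog RG. \<forall>b\<in>homog RG. a * b \<in> p \<longrightarrow> a \<in> p \<or> b \<in> p)}"

definition colon :: "('r \<Rightarrow> 'm \<Rightarrow> 'm) \<Rightarrow> 'm set \<Rightarrow> 'r set" where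
  "colon scale K = {r. \<forall>m. scale r m \<in> K}"

definition Ann :: "('r \<Rightarrow> 'm::zero \<Rightarrow> 'm) \<Rightarrow> 'r set" where
  "Ann scale = colon scale {0}"

definition graded_submodule :: "('r::comm_ring_1 \<Rightarrow> 'm::ab_group_add \<Rightarrow> 'm) \<Rightarrow> ('g \<Rightarrow> 'm set) \<Rightarrow> 'm set \<Rightarrow> bool" where
  "graded_submodule scale MG K \<longleftrightarrow> module.subspace scale K \<and> (\<forall>x\<in>K. \<forall>g. hcomp MG x g \<in> K)"

definition graded_prime_submodule ::
  "('g \<Rightarrow> 'r::comm_ring_1 set) \<Rightarrow> ('r \<Rightarrow> 'm::ab_group_add \<Rightarrow> 'm) \<Rightarrow> ('g \<Rightarrow> 'm set) \<Rightarrow> 'm set \<Rightarrow> bool" where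
  "graded_prime_submodule RG scale MG P \<longleftrightarrow> graded_submodule scale MG P \<and> P \<noteq> UNIV \<and>
     (\<forall>r\<in>homog RG. \<forall>m\<in>homog MG. scale r m \<in> P \<longrightarrow> m \<in> P \<or> r \<in> colon scale P)"

(* Gr_M(K): intersection of graded prime submodules containing K (= M if none) *)
definition GrM :: "('g \<Rightarrow> 'r::comm_ring_1 set) \<Rightarrow> ('r \<Rightarrow> 'm::ab_group_add \<Rightarrow> 'm) \<Rightarrow> ('g \<Rightarrow> 'm set) \<Rightarrow> 'm set \<Rightarrow> 'm set" where
  "GrM RG scale MG K = \<Inter>{P. graded_prime_submodule RG scale MG P \<and> K \<subseteq> P}"

definition graded_primeful ::
  "('g \<Rightarrow> 'r::comm_ring_1 set) \<Rightarrow> ('r \<Rightarrow> 'm::ab_group_add \<Rightarrow> 'm) \<Rightarrow> ('g \<Rightarrow> 'm set) \<Rightarrow> 'm set \<Rightarrow> bool" where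
  "graded_primeful RG scale MG K \<longleftrightarrow>
     (\<forall>p\<in>Spec_g RG. colon scale K \<subseteq> p \<longrightarrow>
        (\<exists>P. graded_prime_submodule RG scale MG P \<and> K \<subseteq> P \<and> colon scale P = p))"

definition graded_quasi_primary ::
  "('g \<Rightarrow> 'r::comm_ring_1 set) \<Rightarrow> ('r \<Rightarrow> 'm::ab_group_add \<Rightarrow> 'm) \<Rightarrow> ('g \<Rightarrow> 'm set) \<Rightarrow> 'm set \<Rightarrow> bool" where
  "graded_quasi_primary RG scale MG Q \<longleftrightarrow> graded_submodule scale MG Q \<and> Q \<noteq> UNIV \<and>
     (\<forall>r\<in>homog RG. \<forall>m\<in>homog MG. scale r m \<in> Q \<longrightarrow>
        r \<in> Gr RG (colon scale Q) \<or> m \<in> GrM RG scale MG Q)"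

definition qpSpec :: "('g \<Rightarrow> 'r::comm_ring_1 set) \<Rightarrow> ('r \<Rightarrow> 'm::ab_group_add \<Rightarrow> 'm) \<Rightarrow> ('g \<Rightarrow> 'm set) \<Rightarrow> 'm set set" where
  "qpSpec RG scale MG = {Q. graded_quasi_primary RG scale MG Q \<and> graded_primeful RG scale MG Q}"

definition qpSpec_at :: "('g \<Rightarrow> 'r::comm_ring_1 set) \<Rightarrow> ('r \<Rightarrow> 'm::ab_group_add \<Rightarrow> 'm) \<Rightarrow> ('g \<Rightarrow> 'm set) \<Rightarrow> 'r set \<Rightarrow> 'm set set" where
  "qpSpec_at RG scale MG p = {Q \<in> qpSpec RG scale MG. Gr RG (colon scale Q) = p}"

definition qpV :: "('g \<Rightarrow> 'r::comm_ring_1 set) \<Rightarrow> ('r \<Rightarrow> 'm::ab_group_add \<Rightarrow> 'm) \<Rightarrow> ('g \<Rightarrow> 'm set) \<Rightarrow> 'm set \<Rightarrow> 'm set set" where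
  "qpV RG scale MG K = {Q \<in> qpSpec RG scale MG. Gr RG (colon scale K) \<subseteq> Gr RG (colon scale Q)}"

(* I/Ann(M), represented as the set of cosets x + Ann(M), x \<in> I, in R/Ann(M) *)
definition quot_Ann :: "('r::comm_ring_1 \<Rightarrow> 'm::ab_group_add \<Rightarrow> 'm) \<Rightarrow> 'r set \<Rightarrow> 'r set set" where
  "quot_Ann scale I = (\<lambda>x. (\<lambda>a. x + a) ` Ann scale) ` I"

definition phi :: "('g \<Rightarrow> 'r::comm_ring_1 set) \<Rightarrow> ('r \<Rightarrow> 'm::ab_group_add \<Rightarrow> 'm) \<Rightarrow> ('g \<Rightarrow> 'm set) \<Rightarrow> 'm set \<Rightarrow> 'r set set" where
  "phi RG scale MG Q = quot_Ann scale (colon scale (GrM RG scale MG Q))"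

end

theory Submission imports Defs begin

text \<open>All three conditions say that \<open>Q \<mapsto> Gr((Q :\<^sub>R M))\<close> is injective on
\<open>qp.Spec\<^sub>g(M)\<close>. For (1), note \<open>Q \<in> qp-V(Q)\<close>, so \<open>qp-V(Q)\<close> determines \<open>Gr((Q :\<^sub>R M))\<close>
and conversely; for (2), the fibres of the map are the sets \<open>qp.Spec\<^sup>p\<^sub>g(M)\<close>, and
\<open>Gr((Q :\<^sub>R M))\<close> is always a graded prime because \<open>Q\<close> is quasi-primary; for (3), the
cosets in \<open>\<phi>(Q)\<close> recover the ideal \<open>(Gr\<^sub>M(Q) :\<^sub>R M)\<close> as their union, and this ideal
equals \<open>Gr((Q :\<^sub>R M))\<close>: by the primeful property both are the intersection of the graded
primes containing \<open>(Q :\<^sub>R M)\<close>, the graded radical being such an intersection by a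
Zorn's-lemma argument as in Krull's theorem.\<close>

section \<open>Homogeneous components\<close>

lemma grading_zero_mem: "direct_sum_grading D \<Longrightarrow> 0 \<in> D g"
  unfolding direct_sum_grading_def by blast

lemma grading_add_mem:
  assumes "direct_sum_grading D" "x \<in> D g" "y \<in> D g"
  shows "x + y \<in> D g"
proof -
  have diff: "\<And>x y. x \<in> D g \<Longrightarrow> y \<in> D g \<Longrightarrow> x - y \<in> D g"
    using assms(1) unfolding direct_sum_grading_def by blast
  have "- y \<in> D g" using diff[OF grading_zero_mem[OF assms(1)] assms(3)] by simp
  then show ?thesis using diff[OF assms(2), of "- y"] by simp
qed

lemma is_decomp_hcomp:
  assumes "direct_sum_grading D"
  shows "is_decomp D x (hcomp D x)"
proof -
  have "\<exists>!c. is_decomp D x c" using assms unfolding direct_sum_grading_def by blast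
  then show ?thesis unfolding hcomp_def by (rule theI')
qed

lemma hcomp_mem: "direct_sum_grading D \<Longrightarrow> hcomp D x g \<in> D g"
  using is_decomp_hcomp[of D x] unfolding is_decomp_def by blast

lemma hcomp_mem_homog: "direct_sum_grading D \<Longrightarrow> hcomp D x g \<in> homog D"
  using hcomp_mem[of D x g] unfolding homog_def by blast

lemma finite_hcomp_support: "direct_sum_grading D \<Longrightarrow> finite {g. hcomp D x g \<noteq> 0}"
  using is_decomp_hcomp[of D x] unfolding is_decomp_def by blast

lemma sum_hcomp:
  assumes "direct_sum_grading D"
  shows "(\<Sum>g\<in>{g. hcomp D x g \<noteq> 0}. hcomp D x g) = x"
  using is_decomp_hcomp[OF assms, of x] unfolding is_decomp_def by argo

lemma sum_hcomp_superset:
  assumes "direct_sum_grading D" "finite F" "{g. hcomp D x g \<noteq> 0} \<subseteq> F"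
  shows "(\<Sum>g\<in>F. hcomp D x g) = x"
proof -
  have "(\<Sum>g\<in>F. hcomp D x g) = (\<Sum>g\<in>{g. hcomp D x g \<noteq> 0}. hcomp D x g)"
    by (rule sum.mono_neutral_right) (use assms(2,3) in auto)
  also have "\<dots> = x" by (rule sum_hcomp[OF assms(1)])
  finally show ?thesis .
qed

lemma hcomp_eqI:
  assumes D: "direct_sum_grading D" and F: "finite F"
    and c: "\<And>k. c k \<in> D k" "\<And>k. k \<notin> F \<Longrightarrow> c k = 0" and x: "x = (\<Sum>k\<in>F. c k)"
  shows "hcomp D x = c"
proof -
  have supp: "{k. c k \<noteq> 0} \<subseteq> F" using c(2) by blast
  have "x = (\<Sum>k\<in>{k. c k \<noteq> 0}. c k)"
    unfolding x by (rule sum.mono_neutral_right) (use F supp in auto)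
  then have "is_decomp D x c"
    unfolding is_decomp_def using c(1) finite_subset[OF supp F] by blast
  moreover have "\<exists>!c. is_decomp D x c" using D unfolding direct_sum_grading_def by blast
  ultimately show ?thesis using is_decomp_hcomp[OF D] by blast
qed

lemma hcomp_homog:
  assumes "direct_sum_grading D" "x \<in> D h"
  shows "hcomp D x = (\<lambda>g. if g = h then x else 0)"
  by (rule hcomp_eqI[OF assms(1), of "{h}"]) (use assms grading_zero_mem in auto)

lemma hcomp_add:
  assumes D: "direct_sum_grading D"
  shows "hcomp D (x + y) = (\<lambda>g. hcomp D x g + hcomp D y g)"
proof (rule hcomp_eqI[OF D])
  let ?F = "{g. hcomp D x g \<noteq> 0} \<union> {g. hcomp D y g \<noteq> 0}"
  show "finite ?F" using finite_hcomp_support[OF D] by blast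
  show "hcomp D x k + hcomp D y k \<in> D k" for k
    using grading_add_mem[OF D hcomp_mem[OF D] hcomp_mem[OF D]] .
  show "k \<notin> ?F \<Longrightarrow> hcomp D x k + hcomp D y k = 0" for k by simp
  have "(\<Sum>g\<in>?F. hcomp D x g) = x" "(\<Sum>g\<in>?F. hcomp D y g) = y"
    using sum_hcomp_superset[OF D \<open>finite ?F\<close>] by blast+
  then show "x + y = (\<Sum>g\<in>?F. hcomp D x g + hcomp D y g)"
    by (simp add: sum.distrib)
qed

lemma hcomp_degree_shift:
  fixes f :: "'a::ab_group_add \<Rightarrow> 'b::ab_group_add" and h :: "'g::group_add"
  assumes A: "direct_sum_grading A" and B: "direct_sum_grading B"
    and add: "\<And>x y. f (x + y) = f x + f y"
    and deg: "\<And>g s. s \<in> A g \<Longrightarrow> f s \<in> B (g + h)"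
  shows "hcomp B (f s) k = f (hcomp A s (k - h))"
proof -
  have f0: "f 0 = 0" using add[of 0 0] by simp
  let ?S = "{g. hcomp A s g \<noteq> 0}"
  have "hcomp B (f s) = (\<lambda>k. f (hcomp A s (k - h)))"
  proof (rule hcomp_eqI[OF B, of "(\<lambda>g. g + h) ` ?S"])
    show "finite ((\<lambda>g. g + h) ` ?S)" using finite_hcomp_support[OF A] by blast
    show "f (hcomp A s (k - h)) \<in> B k" for k
      using deg[OF hcomp_mem[OF A]] by (metis diff_add_cancel)
    show "f (hcomp A s (k - h)) = 0" if "k \<notin> (\<lambda>g. g + h) ` ?S" for k
      using that f0 by (metis (mono_tags, lifting) diff_add_cancel image_eqI mem_Collect_eq)
    have "(\<Sum>k\<in>(\<lambda>g. g + h) ` ?S. f (hcomp A s (k - h))) = (\<Sum>g\<in>?S. f (hcomp A s g))"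
      by (subst sum.reindex) (auto intro: inj_onI)
    also have "\<dots> = f s"
      using sum_comp_morphism[of f, OF f0 add, of "hcomp A s" ?S] sum_hcomp[OF A]
      by (simp add: comp_def)
    finally show "f s = (\<Sum>k\<in>(\<lambda>g. g + h) ` ?S. f (hcomp A s (k - h)))" by simp
  qed
  then show ?thesis by simp
qed

section \<open>Graded rings and their graded primes\<close>

lemma graded_ring_grading: "graded_ring RG \<Longrightarrow> direct_sum_grading RG"
  unfolding graded_ring_def by blast

lemma graded_ring_mult_mem: "graded_ring RG \<Longrightarrow> a \<in> RG g \<Longrightarrow> b \<in> RG h \<Longrightarrow> a * b \<in> RG (g + h)"
  unfolding graded_ring_def by blast

lemma hcomp_mult_homog:
  assumes "graded_ring RG" "b \<in> RG h"
  shows "hcomp RG (s * b) k = hcomp RG s (k - h) * b"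
  by (rule hcomp_degree_shift[OF graded_ring_grading graded_ring_grading, OF assms(1,1)])
     (auto simp: distrib_right intro: graded_ring_mult_mem[OF assms(1) _ assms(2)])

lemma one_mem_degree_zero:
  fixes RG :: "'g::group_add \<Rightarrow> 'r::comm_ring_1 set"
  assumes gr: "graded_ring RG"
  shows "1 \<in> RG 0"
proof -
  note D = graded_ring_grading[OF gr]
  let ?e = "hcomp RG 1 0"
  have e_homog: "?e * x = x" if "x \<in> RG h" for x h
    using hcomp_mult_homog[OF gr that, of 1 h] hcomp_homog[OF D that] by simp
  have "?e = ?e * (\<Sum>g\<in>{g. hcomp RG 1 g \<noteq> 0}. hcomp RG 1 g)" by (simp add: sum_hcomp[OF D])
  also have "\<dots> = (\<Sum>g\<in>{g. hcomp RG 1 g \<noteq> 0}. hcomp RG 1 g)"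
    by (simp add: sum_distrib_left e_homog[OF hcomp_mem[OF D]])
  finally have "?e = 1" by (simp add: sum_hcomp[OF D])
  then show ?thesis using hcomp_mem[OF D, of 1 0] by simp
qed

lemma homogI: "x \<in> D g \<Longrightarrow> x \<in> homog D"
  unfolding homog_def by blast

lemma homogE: "x \<in> homog D \<Longrightarrow> (\<And>g. x \<in> D g \<Longrightarrow> P) \<Longrightarrow> P"
  unfolding homog_def by blast

lemma homog_one: "graded_ring RG \<Longrightarrow> 1 \<in> homog RG"
  by (rule homogI[OF one_mem_degree_zero])

lemma homog_mult: "graded_ring RG \<Longrightarrow> a \<in> homog RG \<Longrightarrow> b \<in> homog RG \<Longrightarrow> a * b \<in> homog RG"
  by (metis graded_ring_mult_mem homogE homogI)

lemma homog_power: "graded_ring RG \<Longrightarrow> a \<in> homog RG \<Longrightarrow> a ^ n \<in> homog RG"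
  by (induction n) (auto intro: homog_mult homog_one)

lemma is_idealD:
  assumes "is_ideal I"
  shows ideal_zero: "0 \<in> I"
    and ideal_add: "x \<in> I \<Longrightarrow> y \<in> I \<Longrightarrow> x + y \<in> I"
    and ideal_mult_left: "x \<in> I \<Longrightarrow> r * x \<in> I"
    and ideal_mult_right: "x \<in> I \<Longrightarrow> x * r \<in> I"
  using assms unfolding is_ideal_def by (auto simp: mult.commute[of x r])

lemma ideal_eq_UNIV_if_one_mem: "is_ideal I \<Longrightarrow> 1 \<in> I \<Longrightarrow> I = UNIV"
  using ideal_mult_right[of I 1] by auto

lemma ideal_sum: "is_ideal I \<Longrightarrow> (\<And>i. i \<in> F \<Longrightarrow> f i \<in> I) \<Longrightarrow> sum f F \<in> I"
  by (induction F rule: infinite_finite_induct) (auto intro: ideal_zero ideal_add)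

lemma graded_idealD:
  "graded_ideal RG I \<Longrightarrow> is_ideal I"
  "graded_ideal RG I \<Longrightarrow> x \<in> I \<Longrightarrow> hcomp RG x g \<in> I"
  unfolding graded_ideal_def by blast+

lemma homog_mem_Gr_iff:
  assumes "graded_ring RG" "is_ideal I" "a \<in> homog RG"
  shows "a \<in> Gr RG I \<longleftrightarrow> (\<exists>n. a ^ n \<in> I)"
proof -
  obtain h where h: "a \<in> RG h" using assms(3) by (rule homogE)
  have hc: "hcomp RG a = (\<lambda>g. if g = h then a else 0)"
    by (rule hcomp_homog[OF graded_ring_grading[OF assms(1)] h])
  show ?thesis
  proof
    assume "a \<in> Gr RG I"
    then show "\<exists>n. a ^ n \<in> I" unfolding Gr_def mem_Collect_eq hc by (metis (full_types))
  next
    assume a: "\<exists>n. a ^ n \<in> I"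
    have "\<exists>n. hcomp RG a g ^ n \<in> I" for g
      using a ideal_zero[OF assms(2)] unfolding hc by (cases "g = h") (auto intro: exI[of _ "1::nat"])
    then show "a \<in> Gr RG I" unfolding Gr_def by blast
  qed
qed

lemma Spec_gD:
  assumes "p \<in> Spec_g RG"
  shows Spec_g_graded_ideal: "graded_ideal RG p"
    and Spec_g_ideal: "is_ideal p"
    and Spec_g_proper: "p \<noteq> UNIV"
    and Spec_g_prime: "a \<in> homog RG \<Longrightarrow> b \<in> homog RG \<Longrightarrow> a * b \<in> p \<Longrightarrow> a \<in> p \<or> b \<in> p"
  using assms unfolding Spec_g_def graded_ideal_def by blast+

lemma Spec_gI:
  assumes "graded_ideal RG p" "1 \<notin> p"
    "\<And>a b. a \<in> homog RG \<Longrightarrow> b \<in> homog RG \<Longrightarrow> a * b \<in> p \<Longrightarrow> a \<in> p \<or> b \<in> p"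
  shows "p \<in> Spec_g RG"
  using assms unfolding Spec_g_def by blast

lemma Spec_g_one_not_mem: "p \<in> Spec_g RG \<Longrightarrow> 1 \<notin> p"
  using Spec_g_proper Spec_g_ideal ideal_eq_UNIV_if_one_mem by blast

lemma Spec_g_homog_power_mem:
  assumes gr: "graded_ring RG" and p: "p \<in> Spec_g RG" and a: "a \<in> homog RG"
  shows "a ^ n \<in> p \<Longrightarrow> a \<in> p"
proof (induction n)
  case 0
  then show ?case using Spec_g_one_not_mem[OF p] by simp
next
  case (Suc n)
  then show ?case using Spec_g_prime[OF p a homog_power[OF gr a, of n]] by auto
qed

lemma Gr_subset_Spec_g:
  assumes gr: "graded_ring RG" and p: "p \<in> Spec_g RG" and "I \<subseteq> p"
  shows "Gr RG I \<subseteq> p"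
proof
  fix r assume r: "r \<in> Gr RG I"
  note D = graded_ring_grading[OF gr]
  have "hcomp RG r g \<in> p" for g
    using r assms(3) Spec_g_homog_power_mem[OF gr p hcomp_mem_homog[OF D]]
    unfolding Gr_def by blast
  then have "(\<Sum>g\<in>{g. hcomp RG r g \<noteq> 0}. hcomp RG r g) \<in> p"
    by (intro ideal_sum[OF Spec_g_ideal[OF p]])
  then show "r \<in> p" by (simp add: sum_hcomp[OF D])
qed

lemma graded_idealI:
  assumes "0 \<in> I" "\<And>x y. x \<in> I \<Longrightarrow> y \<in> I \<Longrightarrow> x + y \<in> I" "\<And>r x. x \<in> I \<Longrightarrow> r * x \<in> I"
    "\<And>x g. x \<in> I \<Longrightarrow> hcomp RG x g \<in> I"
  shows "graded_ideal RG I"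
  using assms unfolding graded_ideal_def is_ideal_def by blast

lemma graded_ideal_Inter:
  assumes "\<And>p. p \<in> S \<Longrightarrow> graded_ideal RG p"
  shows "graded_ideal RG (\<Inter>S)"
proof (rule graded_idealI)
  note ideal = graded_idealD(1)[OF assms]
  show "0 \<in> \<Inter>S" using ideal_zero[OF ideal] by blast
  show "x + y \<in> \<Inter>S" if "x \<in> \<Inter>S" "y \<in> \<Inter>S" for x y
    using that ideal_add[OF ideal] by blast
  show "r * x \<in> \<Inter>S" if "x \<in> \<Inter>S" for r x
    using that ideal_mult_left[OF ideal] by blast
  show "hcomp RG x g \<in> \<Inter>S" if "x \<in> \<Inter>S" for x g
    using that graded_idealD(2)[OF assms] by blast
qed

lemma graded_ideal_chain_Union:
  assumes "C \<noteq> {}" "subset.chain A C" "\<And>J. J \<in> A \<Longrightarrow> graded_ideal RG J"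
  shows "graded_ideal RG (\<Union>C)"
proof (rule graded_idealI)
  have gi: "\<And>J. J \<in> C \<Longrightarrow> graded_ideal RG J"
    and tot: "\<And>X Y. X \<in> C \<Longrightarrow> Y \<in> C \<Longrightarrow> X \<subseteq> Y \<or> Y \<subseteq> X"
    using assms(2,3) unfolding subset.chain_def by blast+
  note ideal = graded_idealD(1)[OF gi]
  show "0 \<in> \<Union>C" using assms(1) ideal_zero[OF ideal] by blast
  show "x + y \<in> \<Union>C" if xy: "x \<in> \<Union>C" "y \<in> \<Union>C" for x y
  proof -
    obtain X Y where XY: "x \<in> X" "X \<in> C" "y \<in> Y" "Y \<in> C" using xy by blast
    then have "x + y \<in> X \<or> x + y \<in> Y"
      using tot[OF XY(2,4)] ideal_add[OF ideal[OF XY(2)]] ideal_add[OF ideal[OF XY(4)]] by blast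
    then show ?thesis using XY(2,4) by blast
  qed
  show "r * x \<in> \<Union>C" if x: "x \<in> \<Union>C" for r x
  proof -
    obtain X where "x \<in> X" "X \<in> C" using x by blast
    then show ?thesis using ideal_mult_left[OF ideal[OF \<open>X \<in> C\<close>]] by blast
  qed
  show "hcomp RG x g \<in> \<Union>C" if x: "x \<in> \<Union>C" for x g
  proof -
    obtain X where "x \<in> X" "X \<in> C" using x by blast
    then show ?thesis using graded_idealD(2)[OF gi[OF \<open>X \<in> C\<close>]] by blast
  qed
qed

lemma graded_ideal_adjoin_homog:
  assumes gr: "graded_ring RG" and p: "graded_ideal RG p" and x: "x \<in> RG h"
  shows "graded_ideal RG {z + s * x | z s. z \<in> p}"
proof (rule graded_idealI)
  let ?J = "{z + s * x | z s. z \<in> p}"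
  note ip = graded_idealD(1)[OF p]
  show "0 \<in> ?J" using ideal_zero[OF ip] by (intro CollectI exI[of _ 0]) simp
  show "a + b \<in> ?J" if "a \<in> ?J" "b \<in> ?J" for a b
  proof -
    from that obtain z s z' s' where "a = z + s * x" "z \<in> p" "b = z' + s' * x" "z' \<in> p"
      by blast
    moreover have "(z + s * x) + (z' + s' * x) = (z + z') + (s + s') * x"
      by (simp add: algebra_simps)
    ultimately show ?thesis using ideal_add[OF ip] by blast
  qed
  show "r * a \<in> ?J" if "a \<in> ?J" for r a
  proof -
    from that obtain z s where "a = z + s * x" "z \<in> p" by blast
    moreover have "r * (z + s * x) = r * z + (r * s) * x" by (simp add: algebra_simps)
    ultimately show ?thesis using ideal_mult_left[OF ip] by blast
  qed
  show "hcomp RG a g \<in> ?J" if "a \<in> ?J" for a g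
  proof -
    from that obtain z s where a: "a = z + s * x" "z \<in> p" by blast
    have "hcomp RG a g = hcomp RG z g + hcomp RG s (g - h) * x"
      unfolding a hcomp_add[OF graded_ring_grading[OF gr]] hcomp_mult_homog[OF gr x] ..
    then show ?thesis using graded_idealD(2)[OF p a(2)] by blast
  qed
qed

text \<open>A graded ideal maximal among those avoiding the powers of \<open>a\<close> is prime: if
\<open>x, y \<notin> p\<close> are homogeneous, maximality puts powers \<open>a\<^sup>i \<in> p + Rx\<close> and \<open>a\<^sup>j \<in> p + Ry\<close>,
so \<open>xy \<in> p\<close> would give \<open>a\<^sup>i\<^sup>+\<^sup>j \<in> p\<close>.\<close>

lemma Spec_g_if_maximal_avoiding_powers:
  assumes gr: "graded_ring RG" and p: "graded_ideal RG p" and avoid: "\<And>n. a ^ n \<notin> p"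
    and max: "\<And>J. graded_ideal RG J \<Longrightarrow> p \<subseteq> J \<Longrightarrow> \<forall>n. a ^ n \<notin> J \<Longrightarrow> J = p"
  shows "p \<in> Spec_g RG"
proof -
  note ip = graded_idealD(1)[OF p]
  have adjoin: "\<exists>n z s. z \<in> p \<and> a ^ n = z + s * x" if x: "x \<in> homog RG" "x \<notin> p" for x
  proof (rule ccontr)
    assume none: "\<not> ?thesis"
    obtain h where "x \<in> RG h" using x(1) by (rule homogE)
    then have "graded_ideal RG {z + s * x | z s. z \<in> p}"
      by (rule graded_ideal_adjoin_homog[OF gr p])
    moreover have "p \<subseteq> {z + s * x | z s. z \<in> p}" by (force intro: exI[of _ 0])
    ultimately have "{z + s * x | z s. z \<in> p} = p" using max none by blast
    moreover have "x \<in> {z + s * x | z s. z \<in> p}"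
      using ideal_zero[OF ip] by (intro CollectI exI[of _ 0] exI[of _ 1]) simp
    ultimately show False using x(2) by blast
  qed
  have "x \<in> p \<or> y \<in> p" if xy: "x \<in> homog RG" "y \<in> homog RG" "x * y \<in> p" for x y
  proof (rule ccontr)
    assume "\<not> (x \<in> p \<or> y \<in> p)"
    then obtain i z s j z' s' where "z \<in> p" "a ^ i = z + s * x" "z' \<in> p" "a ^ j = z' + s' * y"
      using adjoin xy by meson
    moreover have "(z + s * x) * (z' + s' * y) = z * (z' + s' * y) + (s * x) * z' + (s * s') * (x * y)"
      by (simp add: algebra_simps)
    ultimately have "a ^ (i + j) \<in> p"
      unfolding power_add
      by (metis xy(3) ideal_add[OF ip] ideal_mult_left[OF ip] ideal_mult_right[OF ip])
    then show False using avoid by blast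
  qed
  moreover have "1 \<notin> p" using avoid[of 0] by simp
  ultimately show ?thesis using Spec_gI[OF p] by blast
qed

lemma Spec_g_avoiding_powers:
  assumes gr: "graded_ring RG" and I: "graded_ideal RG I" and avoid: "\<And>n. a ^ n \<notin> I"
  obtains p where "p \<in> Spec_g RG" "I \<subseteq> p" "a \<notin> p"
proof -
  define \<A> where "\<A> = {J. graded_ideal RG J \<and> I \<subseteq> J \<and> (\<forall>n. a ^ n \<notin> J)}"
  have "\<Union>C \<in> \<A>" if C: "C \<noteq> {}" "subset.chain \<A> C" for C
  proof -
    have "C \<subseteq> \<A>" using C(2) unfolding subset.chain_def by blast
    moreover have "graded_ideal RG (\<Union>C)"
      by (rule graded_ideal_chain_Union[OF C]) (simp add: \<A>_def)
    ultimately show ?thesis using C(1) unfolding \<A>_def by blast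
  qed
  moreover have "I \<in> \<A>" using I avoid unfolding \<A>_def by blast
  ultimately obtain p where p: "p \<in> \<A>" and max: "\<forall>J\<in>\<A>. p \<subseteq> J \<longrightarrow> J = p"
    using subset_Zorn_nonempty[of \<A>] by blast
  then have "p \<in> Spec_g RG"
    by (intro Spec_g_if_maximal_avoiding_powers[OF gr]) (auto simp: \<A>_def)
  moreover have "I \<subseteq> p" "a \<notin> p" using p unfolding \<A>_def by (auto dest: spec[of _ 1])
  ultimately show thesis by (rule that)
qed

lemma Gr_eq_Inter_Spec_g:
  assumes gr: "graded_ring RG" and I: "graded_ideal RG I"
  shows "Gr RG I = \<Inter>{p\<in>Spec_g RG. I \<subseteq> p}"
proof
  show "Gr RG I \<subseteq> \<Inter>{p\<in>Spec_g RG. I \<subseteq> p}" using Gr_subset_Spec_g[OF gr] by blast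
next
  show "\<Inter>{p\<in>Spec_g RG. I \<subseteq> p} \<subseteq> Gr RG I"
  proof
    fix x assume x: "x \<in> \<Inter>{p\<in>Spec_g RG. I \<subseteq> p}"
    have "\<exists>n. hcomp RG x g ^ n \<in> I" for g
    proof (rule ccontr)
      assume "\<nexists>n. hcomp RG x g ^ n \<in> I"
      then obtain p where p: "p \<in> Spec_g RG" "I \<subseteq> p" "hcomp RG x g \<notin> p"
        using Spec_g_avoiding_powers[OF gr I, of "hcomp RG x g"] by blast
      have "x \<in> p" using x p(1,2) by blast
      then show False using p(3) graded_idealD(2)[OF Spec_g_graded_ideal[OF p(1)]] by blast
    qed
    then show "x \<in> Gr RG I" unfolding Gr_def by blast
  qed
qed

section \<open>Colon ideals of graded submodules\<close>

lemma graded_moduleD: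
  assumes "graded_module RG scale MG"
  shows "graded_ring RG" "module scale" "direct_sum_grading MG"
    "\<And>a m g h. a \<in> RG g \<Longrightarrow> m \<in> MG h \<Longrightarrow> scale a m \<in> MG (g + h)"
  using assms unfolding graded_module_def by blast+

lemma homog_scale:
  assumes "graded_module RG scale MG" "a \<in> homog RG" "m \<in> homog MG"
  shows "scale a m \<in> homog MG"
  by (metis assms graded_moduleD(4) homogE homogI)

lemma hcomp_scale_homog:
  assumes gm: "graded_module RG scale MG" and m: "m \<in> MG h"
  shows "hcomp MG (scale s m) k = scale (hcomp RG s (k - h)) m"
  by (rule hcomp_degree_shift[OF graded_ring_grading[OF graded_moduleD(1)] graded_moduleD(3), OF gm gm])
     (auto simp: module.scale_left_distrib[OF graded_moduleD(2)[OF gm]]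
           intro: graded_moduleD(4)[OF gm _ m])

lemma graded_submoduleD:
  "graded_submodule scale MG Q \<Longrightarrow> module.subspace scale Q"
  "graded_submodule scale MG Q \<Longrightarrow> x \<in> Q \<Longrightarrow> hcomp MG x g \<in> Q"
  unfolding graded_submodule_def by blast+

lemma colon_memI_homog:
  assumes gm: "graded_module RG scale MG" and K: "module.subspace scale K"
    and homog: "\<And>m. m \<in> homog MG \<Longrightarrow> scale r m \<in> K"
  shows "r \<in> colon scale K"
  unfolding colon_def
proof (intro CollectI allI)
  fix m
  note D = graded_moduleD(3)[OF gm] and mo = graded_moduleD(2)[OF gm]
  have "scale r m = (\<Sum>g\<in>{g. hcomp MG m g \<noteq> 0}. scale r (hcomp MG m g))"
    by (metis module.scale_sum_right[OF mo] sum_hcomp[OF D])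
  also have "\<dots> \<in> K"
    by (rule module.subspace_sum[OF mo K]) (rule homog[OF hcomp_mem_homog[OF D]])
  finally show "scale r m \<in> K" .
qed

lemma colon_graded_ideal:
  assumes gm: "graded_module RG scale MG" and Q: "graded_submodule scale MG Q"
  shows "graded_ideal RG (colon scale Q)"
proof -
  note mo = graded_moduleD(2)[OF gm] and sQ = graded_submoduleD(1)[OF Q]
  have "is_ideal (colon scale Q)"
    unfolding is_ideal_def colon_def
    using module.subspace_0[OF mo sQ] module.subspace_add[OF mo sQ]
      module.subspace_scale[OF mo sQ]
    by (simp add: module.scale_zero_left[OF mo] module.scale_left_distrib[OF mo]
        flip: module.scale_scale[OF mo])
  moreover have "hcomp RG x g \<in> colon scale Q" if x: "x \<in> colon scale Q" for x g
  proof (rule colon_memI_homog[OF gm sQ])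
    fix m assume "m \<in> homog MG"
    then obtain h where mh: "m \<in> MG h" by (rule homogE)
    have "hcomp MG (scale x m) (g + h) \<in> Q"
      using x graded_submoduleD(2)[OF Q] unfolding colon_def by blast
    then show "scale (hcomp RG x g) m \<in> Q" by (simp add: hcomp_scale_homog[OF gm mh] add.assoc)
  qed
  ultimately show ?thesis unfolding graded_ideal_def by blast
qed

lemma one_not_mem_colon:
  assumes "module scale" "Q \<noteq> UNIV"
  shows "1 \<notin> colon scale Q"
  using assms unfolding colon_def by (auto simp: module.scale_one)

lemma colon_graded_prime_submodule:
  assumes gm: "graded_module RG scale MG" and P: "graded_prime_submodule RG scale MG P"
  shows "colon scale P \<in> Spec_g RG"
proof -
  note mo = graded_moduleD(2)[OF gm]
  have Pg: "graded_submodule scale MG P" and PU: "P \<noteq> UNIV"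
    and prime: "\<And>r m. r \<in> homog RG \<Longrightarrow> m \<in> homog MG \<Longrightarrow> scale r m \<in> P \<Longrightarrow> m \<in> P \<or> r \<in> colon scale P"
    using P unfolding graded_prime_submodule_def by blast+
  have "a \<in> colon scale P \<or> b \<in> colon scale P"
    if ab: "a \<in> homog RG" "b \<in> homog RG" "a * b \<in> colon scale P" for a b
  proof (rule disjCI)
    assume "b \<notin> colon scale P"
    then obtain m where m: "m \<in> homog MG" "scale b m \<notin> P"
      using colon_memI_homog[OF gm graded_submoduleD(1)[OF Pg]] by blast
    have "scale a (scale b m) \<in> P"
      using ab(3) unfolding colon_def by (simp add: module.scale_scale[OF mo])
    then show "a \<in> colon scale P" using prime[OF ab(1) homog_scale[OF gm ab(2) m(1)]] m(2) by blast
  qed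
  then show ?thesis using Spec_gI[OF colon_graded_ideal[OF gm Pg] one_not_mem_colon[OF mo PU]] by blast
qed

lemma colon_Inter: "colon scale (\<Inter>S) = \<Inter>(colon scale ` S)"
  unfolding colon_def by blast

lemma colon_mono: "A \<subseteq> B \<Longrightarrow> colon scale A \<subseteq> colon scale B"
  unfolding colon_def by blast

text \<open>This is where the graded primeful property enters: the colon ideals of the graded
primes above \<open>Q\<close> are exactly the graded primes above \<open>(Q :\<^sub>R M)\<close>.\<close>

lemma colon_GrM_eq_Gr_colon:
  assumes gm: "graded_module RG scale MG" and Q: "graded_submodule scale MG Q"
    and primeful: "graded_primeful RG scale MG Q"
  shows "colon scale (GrM RG scale MG Q) = Gr RG (colon scale Q)"
proof -
  let ?Ps = "{P. graded_prime_submodule RG scale MG P \<and> Q \<subseteq> P}"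
  have "colon scale ` ?Ps \<subseteq> {p\<in>Spec_g RG. colon scale Q \<subseteq> p}"
    using colon_graded_prime_submodule[OF gm] colon_mono[of Q _ scale] by blast
  moreover have "{p\<in>Spec_g RG. colon scale Q \<subseteq> p} \<subseteq> colon scale ` ?Ps"
  proof
    fix p assume "p \<in> {p\<in>Spec_g RG. colon scale Q \<subseteq> p}"
    then obtain P where "P \<in> ?Ps" "colon scale P = p"
      using primeful unfolding graded_primeful_def by blast
    then show "p \<in> colon scale ` ?Ps" by blast
  qed
  ultimately have "colon scale ` ?Ps = {p\<in>Spec_g RG. colon scale Q \<subseteq> p}" ..
  then have "colon scale (GrM RG scale MG Q) = \<Inter>{p\<in>Spec_g RG. colon scale Q \<subseteq> p}"
    unfolding GrM_def colon_Inter by simp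
  also have "\<dots> = Gr RG (colon scale Q)"
    by (rule Gr_eq_Inter_Spec_g[OF graded_moduleD(1)[OF gm] colon_graded_ideal[OF gm Q], symmetric])
  finally show ?thesis .
qed

lemma GrM_subspace:
  assumes gm: "graded_module RG scale MG"
  shows "module.subspace scale (GrM RG scale MG Q)"
  unfolding GrM_def
  by (rule module.subspace_Inter[OF graded_moduleD(2)[OF gm]])
     (auto simp: graded_prime_submodule_def dest: graded_submoduleD(1))

section \<open>Quasi-primary submodules\<close>

lemma Gr_graded_ideal:
  assumes "graded_ring RG" "graded_ideal RG I"
  shows "graded_ideal RG (Gr RG I)"
  unfolding Gr_eq_Inter_Spec_g[OF assms] by (rule graded_ideal_Inter) (blast dest: Spec_g_graded_ideal)

lemma homog_mem_Gr_of_power: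
  assumes gr: "graded_ring RG" and I: "is_ideal I" and c: "c \<in> homog RG" "c ^ n \<in> Gr RG I"
  shows "c \<in> Gr RG I"
  using c homog_mem_Gr_iff[OF gr I homog_power[OF gr c(1)]] homog_mem_Gr_iff[OF gr I c(1)]
  by (metis power_mult)

text \<open>If \<open>(ab)\<^sup>n \<in> (Q :\<^sub>R M)\<close>, then either \<open>b\<^sup>n\<close> kills \<open>M\<close> modulo \<open>Gr\<^sub>M(Q)\<close>, or some
homogeneous \<open>b\<^sup>n m \<notin> Gr\<^sub>M(Q)\<close> is sent into \<open>Q\<close> by \<open>a\<^sup>n\<close> and quasi-primality applies.\<close>

lemma Gr_colon_qpSpec_in_Spec_g:
  assumes gm: "graded_module RG scale MG" and Q: "Q \<in> qpSpec RG scale MG"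
  shows "Gr RG (colon scale Q) \<in> Spec_g RG"
proof -
  note gr = graded_moduleD(1)[OF gm] and mo = graded_moduleD(2)[OF gm]
  have Qg: "graded_submodule scale MG Q" and QU: "Q \<noteq> UNIV"
    and qp: "\<And>r m. r \<in> homog RG \<Longrightarrow> m \<in> homog MG \<Longrightarrow> scale r m \<in> Q \<Longrightarrow>
        r \<in> Gr RG (colon scale Q) \<or> m \<in> GrM RG scale MG Q"
    and primeful: "graded_primeful RG scale MG Q"
    using Q unfolding qpSpec_def graded_quasi_primary_def by blast+
  let ?I = "colon scale Q"
  have I: "graded_ideal RG ?I" by (rule colon_graded_ideal[OF gm Qg])
  note mem_Gr = homog_mem_Gr_iff[OF gr graded_idealD(1)[OF I]]
  note Gr_root = homog_mem_Gr_of_power[OF gr graded_idealD(1)[OF I]]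
  show ?thesis
  proof (rule Spec_gI)
    show "graded_ideal RG (Gr RG ?I)" by (rule Gr_graded_ideal[OF gr I])
    show "1 \<notin> Gr RG ?I" using mem_Gr[OF homog_one[OF gr]] one_not_mem_colon[OF mo QU] by simp
  next
    fix a b assume ab: "a \<in> homog RG" "b \<in> homog RG" "a * b \<in> Gr RG ?I"
    obtain n where n: "(a * b) ^ n \<in> ?I" using ab mem_Gr[OF homog_mult[OF gr ab(1,2)]] by blast
    show "a \<in> Gr RG ?I \<or> b \<in> Gr RG ?I"
    proof (cases "\<forall>m\<in>homog MG. scale (b ^ n) m \<in> GrM RG scale MG Q")
      case True
      then have "b ^ n \<in> colon scale (GrM RG scale MG Q)"
        using colon_memI_homog[OF gm GrM_subspace[OF gm]] by blast
      then show ?thesis using Gr_root[OF ab(2)] colon_GrM_eq_Gr_colon[OF gm Qg primeful] by blast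
    next
      case False
      then obtain m where m: "m \<in> homog MG" "scale (b ^ n) m \<notin> GrM RG scale MG Q" by blast
      have "scale (a ^ n) (scale (b ^ n) m) \<in> Q"
        using n unfolding colon_def by (simp add: module.scale_scale[OF mo] power_mult_distrib)
      then have "a ^ n \<in> Gr RG ?I"
        using qp[OF homog_power[OF gr ab(1)] homog_scale[OF gm homog_power[OF gr ab(2)] m(1)]] m(2)
        by blast
      then show ?thesis using Gr_root[OF ab(1)] by blast
    qed
  qed
qed

lemma qpV_eq_iff:
  assumes "Q \<in> qpSpec RG scale MG" "P \<in> qpSpec RG scale MG"
  shows "qpV RG scale MG Q = qpV RG scale MG P \<longleftrightarrow> Gr RG (colon scale Q) = Gr RG (colon scale P)"
proof
  assume "qpV RG scale MG Q = qpV RG scale MG P"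
  then have "Q \<in> qpV RG scale MG P" "P \<in> qpV RG scale MG Q"
    using assms unfolding qpV_def by blast+
  then show "Gr RG (colon scale Q) = Gr RG (colon scale P)" unfolding qpV_def by blast
qed (simp add: qpV_def)

lemma Union_quot_Ann_colon:
  assumes mo: "module scale"
  shows "\<Union>(quot_Ann scale (colon scale K)) = colon scale K"
proof -
  have "x + a \<in> colon scale K \<longleftrightarrow> x \<in> colon scale K" if "a \<in> Ann scale" for x a
    using that unfolding Ann_def colon_def by (simp add: module.scale_left_distrib[OF mo])
  moreover have "0 \<in> Ann scale" unfolding Ann_def colon_def by (simp add: module.scale_zero_left[OF mo])
  ultimately show ?thesis unfolding quot_Ann_def by force
qed

lemma phi_eq_iff:
  assumes gm: "graded_module RG scale MG"
    and Q: "Q \<in> qpSpec RG scale MG" and P: "P \<in> qpSpec RG scale MG"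
  shows "phi RG scale MG Q = phi RG scale MG P \<longleftrightarrow> Gr RG (colon scale Q) = Gr RG (colon scale P)"
proof -
  have colon_GrM: "colon scale (GrM RG scale MG K) = Gr RG (colon scale K)"
    if "K \<in> qpSpec RG scale MG" for K
    using that colon_GrM_eq_Gr_colon[OF gm] unfolding qpSpec_def graded_quasi_primary_def by blast
  have "phi RG scale MG Q = phi RG scale MG P
      \<longleftrightarrow> colon scale (GrM RG scale MG Q) = colon scale (GrM RG scale MG P)"
  proof
    assume "phi RG scale MG Q = phi RG scale MG P"
    then have "\<Union>(phi RG scale MG Q) = \<Union>(phi RG scale MG P)" by simp
    then show "colon scale (GrM RG scale MG Q) = colon scale (GrM RG scale MG P)"
      unfolding phi_def Union_quot_Ann_colon[OF graded_moduleD(2)[OF gm]] .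
  qed (simp add: phi_def)
  then show ?thesis unfolding colon_GrM[OF Q] colon_GrM[OF P] .
qed

lemma finite_card_le_one_iff: "finite S \<and> card S \<le> 1 \<longleftrightarrow> (\<forall>x\<in>S. \<forall>y\<in>S. x = y)"
proof
  assume "finite S \<and> card S \<le> 1"
  then show "\<forall>x\<in>S. \<forall>y\<in>S. x = y" using card_le_Suc0_iff_eq by (metis One_nat_def)
next
  assume "\<forall>x\<in>S. \<forall>y\<in>S. x = y"
  then have "S = {} \<or> (\<exists>x. S = {x})" by blast
  then show "finite S \<and> card S \<le> 1" by auto
qed

lemma card_qpSpec_at_le_one_iff:
  assumes gm: "graded_module RG scale MG"
  shows "(\<forall>p\<in>Spec_g RG. finite (qpSpec_at RG scale MG p) \<and> card (qpSpec_at RG scale MG p) \<le> 1)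
     \<longleftrightarrow> inj_on (\<lambda>Q. Gr RG (colon scale Q)) (qpSpec RG scale MG)"
  unfolding finite_card_le_one_iff inj_on_def qpSpec_at_def
  using Gr_colon_qpSpec_in_Spec_g[OF gm] by blast

theorem theorem3p7:
  fixes RG :: "'g::group_add \<Rightarrow> 'r::comm_ring_1 set"
    and scale :: "'r \<Rightarrow> 'm::ab_group_add \<Rightarrow> 'm"
    and MG :: "'g \<Rightarrow> 'm set"
  assumes "graded_module RG scale MG"
  shows "((\<forall>Q\<in>qpSpec RG scale MG. \<forall>P\<in>qpSpec RG scale MG.
             qpV RG scale MG Q = qpV RG scale MG P \<longrightarrow> Q = P)
          \<longleftrightarrow> (\<forall>p\<in>Spec_g RG. finite (qpSpec_at RG scale MG p) \<and> card (qpSpec_at RG scale MG p) \<le> 1))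
       \<and> ((\<forall>p\<in>Spec_g RG. finite (qpSpec_at RG scale MG p) \<and> card (qpSpec_at RG scale MG p) \<le> 1)
          \<longleftrightarrow> inj_on (phi RG scale MG) (qpSpec RG scale MG))"
proof -
  let ?inj = "inj_on (\<lambda>Q. Gr RG (colon scale Q)) (qpSpec RG scale MG)"
  have "(\<forall>Q\<in>qpSpec RG scale MG. \<forall>P\<in>qpSpec RG scale MG.
          qpV RG scale MG Q = qpV RG scale MG P \<longrightarrow> Q = P) \<longleftrightarrow> ?inj"
    unfolding inj_on_def by (intro ball_cong refl) (simp add: qpV_eq_iff)
  moreover have "inj_on (phi RG scale MG) (qpSpec RG scale MG) \<longleftrightarrow> ?inj"
    unfolding inj_on_def by (intro ball_cong refl) (simp add: phi_eq_iff[OF assms])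
  ultimately show ?thesis using card_qpSpec_at_le_one_iff[OF assms] by blast
qed

end
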